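(* Let $r_0\in\,]0,1[$, let $A=\{z\in\mathbb{C}: r_0<|z|<1\}$, and let $\mu$ be a complex (Borel) measure on $\partial A=\mathbb{T}\cup r_0\mathbb{T}$, where $\mathbb{T}=\{|z|=1\}$. For $j\in\mathbb{Z}$ define $$\widehat{\mu}^0_j=\int_{r_0\mathbb{T}} z^{-j}\,d\mu(z),\qquad \widehat{\mu}^1_j=\int_{\mathbb{T}} z^{-j}\,d\mu(z).$$ If $\widehat{\mu}^0_j=-\widehat{\mu}^1_j$ for all $j\in\mathbb{Z}$, then every subset of $\partial A$ of arclength measure $0$ is a null set with respect to $\mu$.
   Context: A subset of $\partial A$ has arclength measure $0$ if its intersections with $\mathbb{T}$ and with $r_0\mathbb{T}$ both have arclength (one-dimensional Lebesgue) measure $0$; being a null set with respect to a complex measure $\mu$ means being a null set for its total variation $|\mu|$. *)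

theory Defs
  imports "HOL-Analysis.Analysis"
begin

text \<open>A complex Borel measure on a Borel set S of the complex plane is represented by
  its (Jordan-type) decomposition mu = M1 - M2 + i (M3 - M4) into four finite positive
  Borel measures on the complex plane, each concentrated on S.  Every complex Borel measure
  on S arises this way, and the notions below (values, integrals, total variation) depend
  only on the resulting complex set function, resp. are the standard ones for it.\<close>

definition cmeasure_on :: "complex set \<Rightarrow> complex measure list \<Rightarrow> bool" where
  "cmeasure_on S Ms \<longleftrightarrow> S \<in> sets borel \<and> length Ms = 4 \<and>
     (\<forall>M \<in> set Ms. sets M = sets borel \<and> finite_measure M \<and> emeasure M (- S) = 0)"

definition cval :: "complex measure list \<Rightarrow> complex set \<Rightarrow> complex" where
  "cval Ms E = complex_of_real (measure (Ms!0) E - measure (Ms!1) E)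
             + \<i> * complex_of_real (measure (Ms!2) E - measure (Ms!3) E)"

definition cintegral :: "complex measure list \<Rightarrow> complex set \<Rightarrow> (complex \<Rightarrow> complex) \<Rightarrow> complex" where
  "cintegral Ms B f = (LINT z:B|Ms!0. f z) - (LINT z:B|Ms!1. f z)
                    + \<i> * ((LINT z:B|Ms!2. f z) - (LINT z:B|Ms!3. f z))"

definition ctotal_variation :: "complex measure list \<Rightarrow> complex set \<Rightarrow> real" where
  "ctotal_variation Ms E = Sup {(\<Sum>P\<in>\<P>. cmod (cval Ms P)) | \<P>.
       finite \<P> \<and> disjoint \<P> \<and> \<Union>\<P> = E \<and> \<P> \<subseteq> sets borel}"

definition cnull :: "complex measure list \<Rightarrow> complex set \<Rightarrow> bool" where
  "cnull Ms E \<longleftrightarrow> (\<exists>B \<in> sets borel. E \<subseteq> B \<and> ctotal_variation Ms B = 0)"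

definition circ :: "real \<Rightarrow> complex set" where
  "circ r = {z. cmod z = r}"

text \<open>E \<inter> r T has arclength measure zero (arclength on r T is the image of r times
  Lebesgue measure under t \<mapsto> r e^{it}, t \<in> [0, 2 pi]).\<close>
definition arc_null :: "real \<Rightarrow> complex set \<Rightarrow> bool" where
  "arc_null r E \<longleftrightarrow> {t \<in> {0..2*pi}. complex_of_real r * cis t \<in> E} \<in> null_sets lebesgue"

end

(* The hypothesis says exactly that all Laurent moments of mu vanish: the integral of z^n over
   the whole boundary is 0 for every integer n.  For a compact arclength-null K in T,
   Fatou's construction yields functions g_j = 1 / (1 + F_j), holomorphic on a disc of radius
   > 1 and bounded by 1 on the closed unit disc, where F_j is a sum of Herglotz kernels with
   poles just outside the short grid arcs covering K: Re F_j >= j on K, while F_j -> 0 off K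
   because the arcs have total length o(1/j).  Since mu annihilates the polynomials in z and in
   r0/z, it annihilates g_j(z) and g_j(r0/z), and dominated convergence gives mu(K) = 0; the same
   holds for compact null subsets of r0 T.  Inner regularity extends this to Borel arclength-null
   sets, so a Borel arclength-null hull of a null set has total variation 0. *)

theory Submission
  imports Defs "HOL-Complex_Analysis.Cauchy_Integral_Formula"
begin

lemma norm_cis_diff_le: "cmod (cis a - cis b) \<le> \<bar>a - b\<bar>"
proof -
  have "(cmod (cis a - cis b))\<^sup>2 = (cos a - cos b)\<^sup>2 + (sin a - sin b)\<^sup>2"
    by (simp add: cmod_power2)
  also have "\<dots> = 2 - 2 * cos (a - b)"
    by (simp add: cos_diff power2_diff) (smt (verit) sin_cos_squared_add)
  also have "\<dots> = 4 * (sin ((a - b) / 2))\<^sup>2"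
  proof -
    have half: "2 * ((a - b) / 2) = a - b" by simp
    show ?thesis using cos_double_sin[of "(a - b) / 2"] unfolding half by simp
  qed
  also have "\<dots> \<le> (a - b)\<^sup>2"
  proof -
    have "(sin ((a - b) / 2))\<^sup>2 \<le> ((a - b) / 2)\<^sup>2"
      using abs_sin_x_le_abs_x by (rule abs_le_square_iff[THEN iffD1])
    then show ?thesis by (simp add: power_divide)
  qed
  finally show ?thesis
    by (metis abs_le_square_iff abs_norm_cancel)
qed

lemma Re_add_divide_diff:
  assumes "a \<noteq> z"
  shows "Re ((a + z) / (a - z)) = ((cmod a)\<^sup>2 - (cmod z)\<^sup>2) / (cmod (a - z))\<^sup>2"
proof -
  have "Re (a + z) * Re (a - z) + Im (a + z) * Im (a - z) = (cmod a)\<^sup>2 - (cmod z)\<^sup>2"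
    unfolding cmod_power2 by (simp add: algebra_simps power2_eq_square)
  then show ?thesis by (simp add: Re_divide cmod_power2)
qed

lemma Re_of_real_mult: "Re (complex_of_real c * w) = c * Re w"
  by simp

lemma borel_measurable_Arg2pi: "Arg2pi \<in> borel_measurable borel"
proof -
  have "Arg2pi = (\<lambda>z. if z \<in> - \<real>\<^sub>\<ge>\<^sub>0 then Arg2pi z else 0)"
    by (auto simp: fun_eq_iff Arg2pi_eq_0 complex_nonneg_Reals_iff complex_is_Real_iff)
  moreover have "continuous_on (- \<real>\<^sub>\<ge>\<^sub>0) Arg2pi"
    using continuous_at_Arg2pi by (auto intro: continuous_at_imp_continuous_on)
  moreover have "- \<real>\<^sub>\<ge>\<^sub>0 \<in> sets (borel :: complex measure)"
    by (simp add: borel_open open_Compl)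
  ultimately show ?thesis
    using borel_measurable_continuous_on_if[OF _ _ continuous_on_const, of _ Arg2pi 0] by metis
qed

lemma Arg2pi_of_real_mult_cis:
  assumes "0 < r" "0 \<le> t" "t < 2 * pi"
  shows "Arg2pi (complex_of_real r * cis t) = t"
  using Arg2pi_unique[of r t] assms by (simp add: cis_conv_exp)

lemma circ_eq_sphere: "circ r = sphere 0 r"
  by (auto simp: circ_def)

lemma circ_borel [measurable]: "circ r \<in> sets borel"
  by (simp add: circ_eq_sphere borel_closed)

lemma summable_norm_Taylor_coeffs:
  assumes "1 < R" "g holomorphic_on ball 0 R"
  shows "summable (\<lambda>n. norm ((deriv ^^ n) g 0 / fact n))"
proof -
  define r where "r = (1 + R) / 2"
  have r: "1 < r" "r < R"
    using assms(1) by (auto simp: r_def)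
  then have "(\<lambda>n. (deriv ^^ n) g 0 / fact n * complex_of_real r ^ n) sums g (complex_of_real r)"
    using holomorphic_power_series[OF assms(2), of "complex_of_real r"] by simp
  then have "summable (\<lambda>n. (deriv ^^ n) g 0 / fact n * complex_of_real r ^ n)"
    by (rule sums_summable)
  then have "summable (\<lambda>n. norm ((deriv ^^ n) g 0 / fact n * 1 ^ n))"
    by (rule powser_insidea) (use r in auto)
  then show ?thesis
    by simp
qed

section \<open>Arclength-null sets\<close>

lemma arc_null_mono: "arc_null r F \<Longrightarrow> E \<subseteq> F \<Longrightarrow> arc_null r E"
  unfolding arc_null_def by (erule null_sets_completion_subset[rotated]) auto

lemma arc_null_Un: "arc_null r E \<Longrightarrow> arc_null r F \<Longrightarrow> arc_null r (E \<union> F)"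
  unfolding arc_null_def by (drule (1) null_sets.Un) (simp add: Collect_disj_eq conj_disj_distribL)

lemma arc_null_off_circle:
  assumes "E \<subseteq> circ s" "\<bar>r\<bar> \<noteq> s"
  shows "arc_null r E"
proof -
  have "{t \<in> {0..2*pi}. complex_of_real r * cis t \<in> E} = {}"
    using assms by (auto simp: circ_def norm_mult)
  then show ?thesis unfolding arc_null_def by (metis null_sets.empty_sets)
qed

lemma arc_null_Borel_hull:
  assumes "0 < r" "E \<subseteq> circ r" "arc_null r E"
  obtains B where "B \<in> sets borel" "E \<subseteq> B" "B \<subseteq> circ r" "arc_null r B"
proof -
  obtain N where N: "N \<in> null_sets lborel" "{t \<in> {0..2*pi}. complex_of_real r * cis t \<in> E} \<subseteq> N"
    using assms(3) unfolding arc_null_def null_sets_completion_iff2 by blast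
  define B where "B = circ r \<inter> Arg2pi -` N"
  have "B \<in> sets borel"
    using measurable_sets[OF borel_measurable_Arg2pi, of N] N(1) by (auto simp: B_def null_sets_def)
  moreover have "E \<subseteq> B"
  proof
    fix z assume z: "z \<in> E"
    then have "cmod z = r" using assms(2) by (auto simp: circ_def)
    then have "z = complex_of_real r * cis (Arg2pi z)"
      using Arg2pi_eq[of z] by (simp add: cis_conv_exp)
    then have "Arg2pi z \<in> {t \<in> {0..2*pi}. complex_of_real r * cis t \<in> E}"
      using z Arg2pi_ge_0[of z] Arg2pi_lt_2pi[of z] by (simp add: less_imp_le)
    then show "z \<in> B"
      using N(2) z assms(2) unfolding B_def by blast
  qed
  moreover have "arc_null r B"
  proof -
    have "t \<in> N \<union> {2*pi}" if "t \<in> {0..2*pi}" "complex_of_real r * cis t \<in> B" for t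
    proof (cases "t = 2*pi")
      case False
      then have "Arg2pi (complex_of_real r * cis t) = t"
        using that(1) by (intro Arg2pi_of_real_mult_cis[OF \<open>0 < r\<close>]) auto
      then show ?thesis using that(2) by (simp add: B_def)
    qed simp
    then have "{t \<in> {0..2*pi}. complex_of_real r * cis t \<in> B} \<subseteq> N \<union> {2*pi}"
      by blast
    moreover have "N \<union> {2*pi} \<in> null_sets lborel"
      by (rule null_sets.Un[OF N(1) finite_imp_null_set_lborel]) simp
    ultimately show ?thesis
      unfolding arc_null_def by (meson null_sets_completionI null_sets_completion_subset)
  qed
  moreover have "B \<subseteq> circ r"
    by (simp add: B_def)
  ultimately show ?thesis
    using that by blast
qed

lemma arc_null_Borel_hull_two_circles:
  assumes "0 < r" "0 < s" "r \<noteq> s" "E \<subseteq> circ r \<union> circ s" "arc_null r E" "arc_null s E"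
  obtains B where "B \<in> sets borel" "E \<subseteq> B" "B \<subseteq> circ r \<union> circ s"
    "arc_null r B" "arc_null s B"
proof -
  obtain Br where Br: "Br \<in> sets borel" "E \<inter> circ r \<subseteq> Br" "Br \<subseteq> circ r" "arc_null r Br"
    using arc_null_Borel_hull[of r "E \<inter> circ r"] arc_null_mono[OF assms(5), of "E \<inter> circ r"] assms(1)
    by blast
  obtain Bs where Bs: "Bs \<in> sets borel" "E \<inter> circ s \<subseteq> Bs" "Bs \<subseteq> circ s" "arc_null s Bs"
    using arc_null_Borel_hull[of s "E \<inter> circ s"] arc_null_mono[OF assms(6), of "E \<inter> circ s"] assms(2)
    by blast
  have "arc_null s Br" "arc_null r Bs"
    using arc_null_off_circle[OF Br(3), of s] arc_null_off_circle[OF Bs(3), of r] assms by auto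
  show ?thesis
  proof (rule that[of "Br \<union> Bs"])
    show "Br \<union> Bs \<in> sets borel" using Br(1) Bs(1) by simp
    show "E \<subseteq> Br \<union> Bs" using Br(2) Bs(2) assms(4) by blast
    show "Br \<union> Bs \<subseteq> circ r \<union> circ s" using Br(3) Bs(3) by blast
    show "arc_null r (Br \<union> Bs)" "arc_null s (Br \<union> Bs)"
      using Br(4) Bs(4) \<open>arc_null s Br\<close> \<open>arc_null r Bs\<close> by (simp_all add: arc_null_Un)
  qed
qed

lemma arc_null_image_inverse:
  assumes "0 < r" "arc_null r K"
  shows "arc_null 1 ((\<lambda>z. complex_of_real r / z) ` K)"
proof -
  define N where "N = {t \<in> {0..2*pi}. complex_of_real r * cis t \<in> K}"
  have "negligible ((\<lambda>t. 2 * pi - t) ` N)"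
  proof (rule negligible_locally_Lipschitz_image)
    show "negligible N"
      using assms(2) by (simp add: arc_null_def N_def negligible_iff_null_sets)
    show "\<exists>T B. open T \<and> t \<in> T \<and> (\<forall>s\<in>N \<inter> T. norm ((2 * pi - s) - (2 * pi - t)) \<le> B * norm (s - t))"
      for t
      by (rule exI[of _ UNIV], rule exI[of _ 1]) auto
  qed simp
  moreover have "{t \<in> {0..2*pi}. complex_of_real 1 * cis t \<in> (\<lambda>z. complex_of_real r / z) ` K}
      \<subseteq> (\<lambda>t. 2 * pi - t) ` N"
  proof
    fix t assume t: "t \<in> {t \<in> {0..2*pi}. complex_of_real 1 * cis t \<in> (\<lambda>z. complex_of_real r / z) ` K}"
    then obtain w where w: "w \<in> K" "cis t = complex_of_real r / w"
      by auto
    moreover have "w \<noteq> 0"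
      using w(2) by auto
    ultimately have "w = complex_of_real r / cis t"
      by (simp add: field_simps)
    also have "\<dots> = complex_of_real r * cis (2 * pi - t)"
    proof -
      have "cis (2 * pi + - t) = cis (2 * pi) * cis (- t)"
        by (rule cis_mult[symmetric])
      then have "cis (2 * pi - t) = inverse (cis t)"
        by simp
      then show ?thesis
        by (simp add: divide_inverse)
    qed
    finally have "2 * pi - t \<in> N"
      using w(1) t by (auto simp: N_def)
    then show "t \<in> (\<lambda>t. 2 * pi - t) ` N"
      by (rule rev_image_eqI) simp
  qed
  ultimately show ?thesis
    unfolding arc_null_def negligible_iff_null_sets[symmetric] by (rule negligible_subset)
qed

section \<open>Complex measures\<close>

lemma ctotal_variation_eq_0:
  assumes "B \<in> sets borel" "\<And>P. P \<in> sets borel \<Longrightarrow> P \<subseteq> B \<Longrightarrow> cval Ms P = 0"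
  shows "ctotal_variation Ms B = 0"
proof -
  let ?sums = "{(\<Sum>P\<in>\<P>. cmod (cval Ms P)) | \<P>.
      finite \<P> \<and> disjoint \<P> \<and> \<Union>\<P> = B \<and> \<P> \<subseteq> sets borel}"
  have "?sums = {0}"
  proof (intro equalityI subsetI)
    fix x assume "x \<in> ?sums"
    then obtain \<P> where "x = (\<Sum>P\<in>\<P>. cmod (cval Ms P))" "\<Union>\<P> = B" "\<P> \<subseteq> sets borel"
      by blast
    moreover have "cval Ms P = 0" if "P \<in> \<P>" for P
      using assms(2) that \<open>\<Union>\<P> = B\<close> \<open>\<P> \<subseteq> sets borel\<close> by blast
    ultimately show "x \<in> {0}"
      by simp
  next
    fix x :: real assume "x \<in> {0}"
    then show "x \<in> ?sums"
      using assms by (intro CollectI exI[of _ "{B}"]) (auto simp: disjoint_def)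
  qed
  then show ?thesis
    by (simp add: ctotal_variation_def)
qed

definition cweight :: "nat \<Rightarrow> complex" where
  "cweight i = [1, -1, \<i>, -\<i>] ! i"

definition cint :: "complex measure list \<Rightarrow> (complex \<Rightarrow> complex) \<Rightarrow> complex" where
  "cint Ms f = (\<Sum>i<4. cweight i * (\<integral>z. f z \<partial>(Ms!i)))"

lemma norm_cweight: "i < 4 \<Longrightarrow> cmod (cweight i) = 1"
  by (auto simp: cweight_def numeral_eq_Suc less_Suc_eq)

lemma cval_eq_sum: "cval Ms A = (\<Sum>i<4. cweight i * measure (Ms!i) A)"
  by (simp add: cval_def cweight_def numeral_eq_Suc algebra_simps)

lemma cintegral_eq_cint: "cintegral Ms B f = cint Ms (\<lambda>z. indicator B z *\<^sub>R f z)"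
  by (simp add: cintegral_def cint_def cweight_def set_lebesgue_integral_def numeral_eq_Suc
      algebra_simps)

locale complex_measure =
  fixes S :: "complex set" and Ms :: "complex measure list"
  assumes cmeasure_on: "cmeasure_on S Ms"
begin

lemma S_borel [measurable]: "S \<in> sets borel"
  using cmeasure_on by (simp add: cmeasure_on_def)

lemma component:
  assumes "i < 4"
  shows "sets (Ms!i) = sets borel" "finite_measure (Ms!i)" "emeasure (Ms!i) (- S) = 0"
  using cmeasure_on assms nth_mem[of i Ms] by (auto simp: cmeasure_on_def)

lemma space_component: "i < 4 \<Longrightarrow> space (Ms!i) = UNIV"
  using sets_eq_imp_space_eq[OF component(1)] by simp

lemma measurable_component:
  "i < 4 \<Longrightarrow> f \<in> borel_measurable borel \<Longrightarrow> f \<in> borel_measurable (Ms!i)"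
  using measurable_cong_sets[OF component(1) refl] by blast

lemma AE_component: "i < 4 \<Longrightarrow> AE z in Ms!i. z \<in> S"
  using AE_iff_measurable[of "- S" "Ms!i" "\<lambda>z. z \<in> S"] component[of i] space_component[of i]
  by auto

lemma integrable_component:
  fixes f :: "complex \<Rightarrow> complex"
  assumes "i < 4" "f \<in> borel_measurable borel" "\<And>z. z \<in> S \<Longrightarrow> norm (f z) \<le> B"
  shows "integrable (Ms!i) f"
proof -
  interpret finite_measure "Ms!i" using component(2)[OF assms(1)] .
  show ?thesis
    using AE_component[OF assms(1)] assms(3)
    by (intro integrable_const_bound[where B=B] measurable_component[OF assms(1,2)])
      (auto elim!: AE_mp)
qed

lemma cint_tendsto:
  fixes f :: "complex \<Rightarrow> complex"
  assumes "f \<in> borel_measurable borel" "\<And>n. s n \<in> borel_measurable borel"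
    and "\<And>z. z \<in> S \<Longrightarrow> (\<lambda>n. s n z) \<longlonglongrightarrow> f z"
    and "\<And>n z. z \<in> S \<Longrightarrow> norm (s n z) \<le> B"
  shows "(\<lambda>n. cint Ms (s n)) \<longlonglongrightarrow> cint Ms f"
proof -
  have "(\<lambda>n. \<integral>z. s n z \<partial>(Ms!i)) \<longlonglongrightarrow> (\<integral>z. f z \<partial>(Ms!i))" if i: "i < 4" for i
  proof -
    interpret finite_measure "Ms!i" using component(2)[OF i] .
    show ?thesis
      using AE_component[OF i] assms
      by (intro integral_dominated_convergence[where w="\<lambda>_. B"] measurable_component[OF i])
        (auto elim!: AE_mp)
  qed
  then show ?thesis
    unfolding cint_def by (intro tendsto_intros) auto
qed

lemma cint_cong:
  assumes "f \<in> borel_measurable borel" "g \<in> borel_measurable borel"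
    and "\<And>z. z \<in> S \<Longrightarrow> f z = g z"
  shows "cint Ms f = cint Ms g"
proof -
  have "(\<integral>z. f z \<partial>(Ms!i)) = (\<integral>z. g z \<partial>(Ms!i))" if i: "i < 4" for i
    using AE_component[OF i] assms
    by (intro integral_cong_AE measurable_component[OF i]) (auto elim!: AE_mp)
  then show ?thesis
    unfolding cint_def by (intro sum.cong) auto
qed

lemma cint_cmult: "cint Ms (\<lambda>z. c * f z) = c * cint Ms f"
  by (simp add: cint_def sum_distrib_left mult.left_commute)

lemma cint_sum:
  fixes f :: "'k \<Rightarrow> complex \<Rightarrow> complex"
  assumes "finite A" "\<And>k. k \<in> A \<Longrightarrow> f k \<in> borel_measurable borel"
    and "\<And>k z. k \<in> A \<Longrightarrow> z \<in> S \<Longrightarrow> norm (f k z) \<le> B k"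
  shows "cint Ms (\<lambda>z. \<Sum>k\<in>A. f k z) = (\<Sum>k\<in>A. cint Ms (f k))"
proof -
  have "(\<integral>z. (\<Sum>k\<in>A. f k z) \<partial>(Ms!i)) = (\<Sum>k\<in>A. \<integral>z. f k z \<partial>(Ms!i))" if i: "i < 4" for i
    using assms by (intro Bochner_Integration.integral_sum integrable_component[OF i]) auto
  then show ?thesis
    unfolding cint_def by (simp add: sum_distrib_left sum.swap[of _ A])
qed

lemma cint_diff:
  assumes "f \<in> borel_measurable borel" "\<And>z. z \<in> S \<Longrightarrow> norm (f z) \<le> B"
    and "g \<in> borel_measurable borel" "\<And>z. z \<in> S \<Longrightarrow> norm (g z) \<le> C"
  shows "cint Ms (\<lambda>z. f z - g z) = cint Ms f - cint Ms g"
proof -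
  have "(\<integral>z. f z - g z \<partial>(Ms!i)) = (\<integral>z. f z \<partial>(Ms!i)) - (\<integral>z. g z \<partial>(Ms!i))" if i: "i < 4" for i
    using assms by (intro Bochner_Integration.integral_diff integrable_component[OF i])
  then show ?thesis
    unfolding cint_def by (simp add: right_diff_distrib sum_subtractf)
qed

lemma cint_indicator:
  assumes "A \<in> sets borel"
  shows "cint Ms (indicator A) = cval Ms A"
proof -
  have "(\<integral>z. indicator A z \<partial>(Ms!i)) = complex_of_real (measure (Ms!i) A)" if i: "i < 4" for i
  proof -
    interpret finite_measure "Ms!i" using component(2)[OF i] .
    have "(\<lambda>z. indicator A z :: complex) = (\<lambda>z. complex_of_real (indicator A z))"
      by (auto simp: indicator_def)
    then show ?thesis
      using assms component(1)[OF i] by simp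
  qed
  then show ?thesis
    unfolding cint_def cval_eq_sum by simp
qed

lemma cint_eq_cintegral_add:
  assumes "A \<in> sets borel" "B \<in> sets borel" "A \<inter> B = {}" "S \<subseteq> A \<union> B"
    and "f \<in> borel_measurable borel" "\<And>z. z \<in> S \<Longrightarrow> norm (f z) \<le> C"
  shows "cint Ms f = cintegral Ms A f + cintegral Ms B f"
proof -
  have bound: "norm (indicator X z *\<^sub>R f z) \<le> C" if "z \<in> S" for X z
    using assms(6)[OF that] order_trans[OF norm_ge_zero assms(6)[OF that]]
    by (auto simp: indicator_def)
  have "cint Ms f = cint Ms (\<lambda>z. indicator A z *\<^sub>R f z + indicator B z *\<^sub>R f z)"
    using assms(1-5) by (intro cint_cong) (auto simp: indicator_def)
  also have "\<dots> = cint Ms (\<lambda>z. indicator A z *\<^sub>R f z) + cint Ms (\<lambda>z. indicator B z *\<^sub>R f z)"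
    using cint_diff[of "\<lambda>z. indicator A z *\<^sub>R f z" C "\<lambda>z. - (indicator B z *\<^sub>R f z)" C]
      assms(1,2,5) bound cint_cmult[of "-1" "\<lambda>z. indicator B z *\<^sub>R f z"]
    by simp
  finally show ?thesis
    by (simp add: cintegral_eq_cint)
qed

lemma cval_Un:
  assumes "A \<in> sets borel" "B \<in> sets borel" "A \<inter> B = {}"
  shows "cval Ms (A \<union> B) = cval Ms A + cval Ms B"
proof -
  have "measure (Ms!i) (A \<union> B) = measure (Ms!i) A + measure (Ms!i) B" if i: "i < 4" for i
  proof -
    interpret finite_measure "Ms!i" using component(2)[OF i] .
    show ?thesis using assms component(1)[OF i] by (intro finite_measure_Union) auto
  qed
  then show ?thesis
    unfolding cval_eq_sum by (simp add: distrib_left sum.distrib)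
qed

lemma norm_cval_le: "cmod (cval Ms A) \<le> (\<Sum>i<4. measure (Ms!i) A)"
proof -
  have "cmod (cval Ms A) \<le> (\<Sum>i<4. cmod (cweight i * measure (Ms!i) A))"
    unfolding cval_eq_sum by (rule norm_sum)
  also have "\<dots> = (\<Sum>i<4. measure (Ms!i) A)"
    by (intro sum.cong) (simp_all add: norm_mult norm_cweight)
  finally show ?thesis .
qed

lemma compact_inner_approx:
  assumes "P \<in> sets borel" "0 < e"
  obtains K where "compact K" "K \<subseteq> P" "\<And>i. i < 4 \<Longrightarrow> measure (Ms!i) (P - K) < e"
proof -
  have "\<exists>K. compact K \<and> K \<subseteq> P \<and> measure (Ms!i) (P - K) < e" if i: "i < 4" for i
  proof (cases "measure (Ms!i) P < e")
    case True
    then show ?thesis by (intro exI[of _ "{}"]) auto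
  next
    case False
    interpret finite_measure "Ms!i" using component(2)[OF i] .
    have "emeasure (Ms!i) P = (SUP K \<in> {K. K \<subseteq> P \<and> compact K}. emeasure (Ms!i) K)"
      using component(1)[OF i] assms(1) by (intro inner_regular) auto
    moreover have "ennreal (measure (Ms!i) P - e) < emeasure (Ms!i) P"
      using False assms(2) by (simp add: emeasure_eq_measure ennreal_less_iff)
    ultimately obtain K where K: "K \<subseteq> P" "compact K" "ennreal (measure (Ms!i) P - e) < emeasure (Ms!i) K"
      by (auto simp: less_SUP_iff)
    have "K \<in> sets (Ms!i)"
      using component(1)[OF i] K(2) by (simp add: borel_compact)
    moreover have "measure (Ms!i) P - e < measure (Ms!i) K"
      using K(3) False by (simp add: emeasure_eq_measure ennreal_less_iff)
    ultimately have "measure (Ms!i) (P - K) < e"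
      using K(1) assms(1) component(1)[OF i] by (simp add: finite_measure_Diff)
    then show ?thesis using K by blast
  qed
  then obtain Kf where Kf: "\<And>i. i < 4 \<Longrightarrow> compact (Kf i) \<and> Kf i \<subseteq> P \<and> measure (Ms!i) (P - Kf i) < e"
    by metis
  show ?thesis
  proof (rule that[of "\<Union>i<4. Kf i"])
    show "compact (\<Union>i<4. Kf i)" using Kf by (intro compact_UN) auto
    show "(\<Union>i<4. Kf i) \<subseteq> P" using Kf by blast
    fix i :: nat assume i: "i < 4"
    interpret finite_measure "Ms!i" using component(2)[OF i] .
    have "measure (Ms!i) (P - (\<Union>i<4. Kf i)) \<le> measure (Ms!i) (P - Kf i)"
      using i Kf[OF i] assms(1) component(1)[OF i]
      by (intro finite_measure_mono) (auto simp: borel_compact)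
    then show "measure (Ms!i) (P - (\<Union>i<4. Kf i)) < e"
      using Kf[OF i] by linarith
  qed
qed

lemma cint_holomorphic_comp_eq_0:
  assumes "1 < R" "g holomorphic_on ball 0 R"
    and "\<phi> \<in> borel_measurable borel" "\<And>z. z \<in> S \<Longrightarrow> norm (\<phi> z) \<le> 1"
    and "(\<lambda>z. g (\<phi> z)) \<in> borel_measurable borel"
    and "\<And>n. cint Ms (\<lambda>z. \<phi> z ^ n) = 0"
  shows "cint Ms (\<lambda>z. g (\<phi> z)) = 0"
proof -
  define a where "a n = (deriv ^^ n) g 0 / fact n" for n
  have sums: "(\<lambda>n. a n * w ^ n) sums g w" if "w \<in> ball 0 R" for w
    using holomorphic_power_series[OF assms(2) that] by (simp add: a_def)
  have summable_a: "summable (\<lambda>n. norm (a n))"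
    unfolding a_def by (rule summable_norm_Taylor_coeffs[OF assms(1,2)])
  define s where "s N z = (\<Sum>n<N. a n * \<phi> z ^ n)" for N z
  have norm_power_\<phi>: "norm (\<phi> z ^ n) \<le> 1" if "z \<in> S" for z n
    using assms(4)[OF that] by (simp add: norm_power power_le_one)
  have "(\<lambda>N. cint Ms (s N)) \<longlonglongrightarrow> cint Ms (\<lambda>z. g (\<phi> z))"
  proof (rule cint_tendsto[OF assms(5)])
    show "s N \<in> borel_measurable borel" for N
      unfolding s_def using assms(3) by measurable
    show "(\<lambda>N. s N z) \<longlonglongrightarrow> g (\<phi> z)" if "z \<in> S" for z
      using sums[of "\<phi> z"] order_le_less_trans[OF assms(4)[OF that] assms(1)]
      by (simp add: s_def sums_def)
    show "norm (s N z) \<le> (\<Sum>n. norm (a n))" if "z \<in> S" for N z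
    proof -
      have "norm (s N z) \<le> (\<Sum>n<N. norm (a n * \<phi> z ^ n))"
        unfolding s_def by (rule norm_sum)
      also have "\<dots> \<le> (\<Sum>n<N. norm (a n))"
        using norm_power_\<phi>[OF that] by (intro sum_mono) (simp add: norm_mult mult_left_le)
      also have "\<dots> \<le> (\<Sum>n. norm (a n))"
        by (rule sum_le_suminf[OF summable_a]) auto
      finally show ?thesis .
    qed
  qed
  moreover have "cint Ms (s N) = 0" for N
  proof -
    have "cint Ms (s N) = (\<Sum>n<N. cint Ms (\<lambda>z. a n * \<phi> z ^ n))"
      unfolding s_def using assms(3) norm_power_\<phi>
      by (intro cint_sum[where B="\<lambda>n. norm (a n)"]) (auto simp: norm_mult mult_left_le)
    then show ?thesis
      by (simp add: cint_cmult assms(6))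
  qed
  ultimately show ?thesis
    by (simp add: LIMSEQ_const_iff)
qed

lemma cval_eq_0_if_compact_subsets:
  assumes "P \<in> sets borel" "\<And>K. compact K \<Longrightarrow> K \<subseteq> P \<Longrightarrow> cval Ms K = 0"
  shows "cval Ms P = 0"
proof -
  have "cmod (cval Ms P) \<le> 0 + e" if "0 < e" for e
  proof -
    obtain K where K: "compact K" "K \<subseteq> P" "\<And>i. i < 4 \<Longrightarrow> measure (Ms!i) (P - K) < e / 4"
      using compact_inner_approx[OF assms(1), of "e / 4"] \<open>0 < e\<close> by auto
    have "K \<in> sets borel"
      using K(1) by (simp add: borel_compact)
    then have "cval Ms P = cval Ms K + cval Ms (P - K)"
      using cval_Un[of K "P - K"] assms(1) K(2) by (simp add: Un_absorb1)
    then have "cmod (cval Ms P) \<le> (\<Sum>i<4. measure (Ms!i) (P - K))"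
      using assms(2)[OF K(1,2)] norm_cval_le[of "P - K"] by simp
    also have "\<dots> \<le> (\<Sum>i<4::nat. e / 4)"
      using K(3) by (intro sum_mono less_imp_le) auto
    finally show ?thesis by simp
  qed
  then show ?thesis
    using field_le_epsilon[of "cmod (cval Ms P)" 0] by simp
qed

end

section \<open>Fatou's peak functions for arclength-null compact subsets of the circle\<close>

definition mesh :: "nat \<Rightarrow> real" where
  "mesh n = 2 * pi / Suc n"

definition grid_hits :: "real set \<Rightarrow> nat \<Rightarrow> nat set" where
  "grid_hits N n = {k. k \<le> n \<and> (\<exists>t\<in>N. real k * mesh n \<le> t \<and> t \<le> (real k + 1) * mesh n)}"

definition grid_length :: "real set \<Rightarrow> nat \<Rightarrow> real" where
  "grid_length N n = mesh n * card (grid_hits N n)"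

lemma mesh_pos: "0 < mesh n"
  by (simp add: mesh_def)

lemma grid_length_nonneg: "0 \<le> grid_length N n"
  using mesh_pos[of n] by (simp add: grid_length_def)

lemma decseq_mesh: "decseq mesh"
  unfolding decseq_def mesh_def by (simp add: frac_le)

lemma mesh_tendsto_0: "mesh \<longlonglongrightarrow> 0"
  using tendsto_mult_right_zero[OF LIMSEQ_inverse_real_of_nat, of "2 * pi"]
  by (simp add: mesh_def[abs_def] divide_inverse)

lemma measure_infdist_le_tendsto:
  fixes N :: "'a::euclidean_space set"
  assumes "closed N" "N \<noteq> {}" "N \<subseteq> C" "C \<in> sets borel" "bounded C"
    and "decseq d" "d \<longlonglongrightarrow> 0"
  shows "(\<lambda>n. measure lborel ({x. infdist x N \<le> d n} \<inter> C)) \<longlonglongrightarrow> measure lborel N"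
proof -
  define D where "D n = {x. infdist x N \<le> d n} \<inter> C" for n
  have "closed {x. infdist x N \<le> d n}" for n
    by (intro closed_Collect_le continuous_intros)
  then have D_borel: "D n \<in> sets borel" for n
    using assms(4) by (simp add: D_def borel_closed)
  have "(\<Inter>n. D n) = N"
  proof
    show "N \<subseteq> (\<Inter>n. D n)"
      using assms(3) decseq_ge[OF assms(6,7)] by (auto simp: D_def)
    show "(\<Inter>n. D n) \<subseteq> N"
    proof
      fix x assume "x \<in> (\<Inter>n. D n)"
      then have "infdist x N \<le> 0"
        by (intro tendsto_lowerbound[OF assms(7)]) (auto simp: D_def)
      then show "x \<in> N"
        using in_closed_iff_infdist_zero[OF assms(1,2)] infdist_nonneg[of x N] by simp
    qed
  qed
  moreover have "(\<lambda>n. measure lborel (D n)) \<longlonglongrightarrow> measure lborel (\<Inter>n. D n)"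
  proof (rule Lim_measure_decseq)
    show "range D \<subseteq> sets lborel"
      using D_borel by auto
    show "decseq D"
      using assms(6) by (auto simp: decseq_def D_def intro: order_trans)
    show "emeasure lborel (D n) \<noteq> \<infinity>" for n
      using emeasure_bounded_finite[of "D n"] bounded_subset[OF assms(5)] by (auto simp: D_def)
  qed
  ultimately show ?thesis
    by (simp add: D_def)
qed

definition grid_cell :: "nat \<Rightarrow> nat \<Rightarrow> real set" where
  "grid_cell n k = {real k * mesh n ..< (real k + 1) * mesh n}"

lemma grid_cell_eq: "grid_cell n k = {s. \<lfloor>s / mesh n\<rfloor> = int k}"
  using mesh_pos[of n]
  by (auto simp: grid_cell_def floor_eq_iff pos_le_divide_eq pos_divide_less_eq algebra_simps)

lemma finite_grid_hits: "finite (grid_hits N n)"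
  by (rule finite_subset[of _ "{..n}"]) (auto simp: grid_hits_def)

lemma measure_grid_cells: "measure lborel (\<Union>k\<in>grid_hits N n. grid_cell n k) = grid_length N n"
proof -
  have "measure lborel (\<Union>k\<in>grid_hits N n. grid_cell n k)
      = (\<Sum>k\<in>grid_hits N n. measure lborel (grid_cell n k))"
  proof (rule measure_finite_Union[OF finite_grid_hits])
    show "disjoint_family_on (grid_cell n) (grid_hits N n)"
      by (auto simp: disjoint_family_on_def grid_cell_eq)
    show "emeasure lborel (grid_cell n k) \<noteq> \<infinity>" for k
    proof -
      have "real k * mesh n \<le> (real k + 1) * mesh n"
        using mesh_pos[of n] by (intro mult_right_mono) auto
      then show ?thesis by (simp add: grid_cell_def)
    qed
  qed (auto simp: grid_cell_def)
  also have "\<dots> = grid_length N n"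
    using mesh_pos[of n] by (simp add: grid_cell_def grid_length_def algebra_simps)
  finally show ?thesis .
qed

lemma grid_cells_subset:
  assumes "N \<subseteq> {0..2*pi}"
  shows "(\<Union>k\<in>grid_hits N n. grid_cell n k) \<subseteq> {t. infdist t N \<le> mesh n} \<inter> {0..2*pi}"
proof safe
  fix k s assume k: "k \<in> grid_hits N n" and s: "s \<in> grid_cell n k"
  then obtain t where t: "t \<in> N" "real k * mesh n \<le> t" "t \<le> (real k + 1) * mesh n"
    by (auto simp: grid_hits_def)
  show "infdist s N \<le> mesh n"
    using s t by (intro infdist_le2[OF t(1)]) (auto simp: grid_cell_def dist_real_def algebra_simps)
  have "(real k + 1) * mesh n \<le> real (Suc n) * mesh n"
    using k mesh_pos[of n] by (intro mult_right_mono) (auto simp: grid_hits_def)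
  moreover have "0 \<le> real k * mesh n" "real (Suc n) * mesh n = 2 * pi"
    using mesh_pos[of n] by (simp_all add: mesh_def)
  moreover have "real k * mesh n \<le> s" "s < (real k + 1) * mesh n"
    using s by (auto simp: grid_cell_def)
  ultimately show "s \<in> {0..2*pi}"
    by simp
qed

lemma grid_length_le_measure:
  assumes "N \<subseteq> {0..2*pi}"
  shows "grid_length N n \<le> measure lborel ({t. infdist t N \<le> mesh n} \<inter> {0..2*pi})"
proof -
  have "(\<Union>k\<in>grid_hits N n. grid_cell n k) \<in> sets lborel"
    using finite_grid_hits by (intro sets.finite_UN) (simp_all add: grid_cell_def)
  moreover have "{t. infdist t N \<le> mesh n} \<inter> {0..2*pi} \<in> fmeasurable lborel"
  proof (rule fmeasurableI)
    have "closed {t. infdist t N \<le> mesh n}"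
      by (intro closed_Collect_le continuous_intros)
    then show "{t. infdist t N \<le> mesh n} \<inter> {0..2*pi} \<in> sets lborel"
      by (simp add: borel_closed)
    show "emeasure lborel ({t. infdist t N \<le> mesh n} \<inter> {0..2*pi}) < \<infinity>"
      by (intro emeasure_bounded_finite bounded_Int) simp
  qed
  ultimately have "measure lborel (\<Union>k\<in>grid_hits N n. grid_cell n k)
      \<le> measure lborel ({t. infdist t N \<le> mesh n} \<inter> {0..2*pi})"
    by (rule measure_mono_fmeasurable[OF grid_cells_subset[OF assms]])
  then show ?thesis
    unfolding measure_grid_cells .
qed

lemma grid_length_tendsto_0:
  assumes "compact N" "N \<subseteq> {0..2*pi}" "N \<in> null_sets lborel"
  shows "grid_length N \<longlonglongrightarrow> 0"
proof (cases "N = {}")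
  case True
  then have "grid_length N = (\<lambda>n. 0)"
    by (simp add: fun_eq_iff grid_length_def grid_hits_def)
  then show ?thesis
    by simp
next
  case False
  have "(\<lambda>n. measure lborel ({t. infdist t N \<le> mesh n} \<inter> {0..2*pi})) \<longlonglongrightarrow> measure lborel N"
    using assms(1,2) False decseq_mesh mesh_tendsto_0
    by (intro measure_infdist_le_tendsto) (auto simp: compact_imp_closed)
  then have lim: "(\<lambda>n. measure lborel ({t. infdist t N \<le> mesh n} \<inter> {0..2*pi})) \<longlonglongrightarrow> 0"
    using assms(3) by (simp add: measure_def null_setsD1)
  show ?thesis
    by (rule real_tendsto_sandwich[OF _ _ tendsto_const lim])
      (simp_all add: grid_length_nonneg grid_length_le_measure[OF assms(2)])
qed

lemma Re_herglotz_term_nonneg: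
  assumes "cmod z < cmod \<zeta>" "0 \<le> c"
  shows "0 \<le> Re (complex_of_real c * ((\<zeta> + z) / (\<zeta> - z)))"
proof -
  have "\<zeta> \<noteq> z" using assms(1) by auto
  moreover have "0 \<le> ((cmod \<zeta>)\<^sup>2 - (cmod z)\<^sup>2) / (cmod (\<zeta> - z))\<^sup>2"
    using assms(1) by (intro divide_nonneg_nonneg) (auto intro!: power_mono)
  ultimately have "0 \<le> Re ((\<zeta> + z) / (\<zeta> - z))"
    by (simp add: Re_add_divide_diff)
  then show ?thesis
    unfolding Re_of_real_mult using assms(2) by simp
qed

lemma Re_herglotz_term_ge:
  assumes "0 < l" "cmod z = 1" "cmod \<zeta> = 1 + l" "cmod (\<zeta> - z) \<le> 2 * l" "0 \<le> M"
  shows "M \<le> Re (complex_of_real (2 * M * l) * ((\<zeta> + z) / (\<zeta> - z)))"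
proof -
  have "\<zeta> \<noteq> z" using assms(1-3) by auto
  then have "0 < (cmod (\<zeta> - z))\<^sup>2" by simp
  moreover have "(cmod (\<zeta> - z))\<^sup>2 \<le> (2 * l)\<^sup>2"
    using assms(4) by (intro power_mono) auto
  ultimately have "(2 * l) / (2 * l)\<^sup>2 \<le> ((1 + l)\<^sup>2 - 1) / (cmod (\<zeta> - z))\<^sup>2"
    using assms(1) by (intro frac_le) (auto simp: power2_eq_square algebra_simps)
  then have "2 * M * l * ((2 * l) / (2 * l)\<^sup>2) \<le> 2 * M * l * (((1 + l)\<^sup>2 - 1) / (cmod (\<zeta> - z))\<^sup>2)"
    using assms(1,5) by (intro mult_left_mono) auto
  moreover have "2 * M * l * ((2 * l) / (2 * l)\<^sup>2) = M"
    using assms(1) by (simp add: power2_eq_square field_simps)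
  ultimately show ?thesis
    unfolding Re_of_real_mult using Re_add_divide_diff[OF \<open>\<zeta> \<noteq> z\<close>] assms(2,3) by simp
qed

lemma norm_herglotz_term_le:
  assumes "cmod z \<le> 1" "cmod \<zeta> = 1 + l" "0 < l" "l \<le> 1" "0 < e" "e \<le> cmod (\<zeta> - z)" "0 \<le> M"
  shows "cmod (complex_of_real (2 * M * l) * ((\<zeta> + z) / (\<zeta> - z))) \<le> 2 * M * l * 3 / e"
proof -
  have "cmod (\<zeta> + z) \<le> 3"
    using norm_triangle_ineq[of \<zeta> z] assms(1-4) by linarith
  then have "cmod ((\<zeta> + z) / (\<zeta> - z)) \<le> 3 / e"
    unfolding norm_divide using assms(5,6) by (intro frac_le) auto
  then have "\<bar>2 * M * l\<bar> * cmod ((\<zeta> + z) / (\<zeta> - z)) \<le> \<bar>2 * M * l\<bar> * (3 / e)"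
    by (intro mult_left_mono) auto
  then show ?thesis
    unfolding norm_mult norm_of_real using assms(3,7) by simp
qed

definition pole :: "nat \<Rightarrow> nat \<Rightarrow> complex" where
  "pole n k = complex_of_real (1 + mesh n) * cis (real k * mesh n)"

(* Re ((p + z) / (p - z)) is the Poisson kernel of the disc of radius cmod p = 1 + mesh n:
   nonnegative inside, and of size about 1 / mesh n within distance 2 mesh n of p. *)
definition herglotz_sum :: "real set \<Rightarrow> nat \<Rightarrow> real \<Rightarrow> complex \<Rightarrow> complex" where
  "herglotz_sum N n M z =
     (\<Sum>k\<in>grid_hits N n. complex_of_real (2 * M * mesh n) * ((pole n k + z) / (pole n k - z)))"

definition peak_fun :: "real set \<Rightarrow> nat \<Rightarrow> real \<Rightarrow> complex \<Rightarrow> complex" where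
  "peak_fun N n M z = 1 / (1 + herglotz_sum N n M z)"

lemma norm_pole: "cmod (pole n k) = 1 + mesh n"
  using mesh_pos[of n] unfolding pole_def norm_mult norm_of_real by simp

lemma norm_pole_diff_cis: "cmod (pole n k - cis (real k * mesh n)) = mesh n"
proof -
  have "pole n k - cis (real k * mesh n) = complex_of_real (mesh n) * cis (real k * mesh n)"
    by (simp add: pole_def algebra_simps)
  then show ?thesis
    using mesh_pos[of n] by (simp add: norm_mult)
qed

lemma Re_herglotz_sum_nonneg:
  assumes "cmod z < 1 + mesh n" "0 \<le> M"
  shows "0 \<le> Re (herglotz_sum N n M z)"
  unfolding herglotz_sum_def Re_sum
  using assms mesh_pos[of n] norm_pole by (intro sum_nonneg Re_herglotz_term_nonneg) auto

lemma one_le_norm_one_add_herglotz_sum: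
  assumes "cmod z < 1 + mesh n" "0 \<le> M"
  shows "1 \<le> cmod (1 + herglotz_sum N n M z)"
  using Re_herglotz_sum_nonneg[OF assms, of N] complex_Re_le_cmod[of "1 + herglotz_sum N n M z"]
  by simp

lemma peak_fun_holomorphic:
  assumes "0 \<le> M"
  shows "peak_fun N n M holomorphic_on ball 0 (1 + mesh n)"
proof -
  have "1 + herglotz_sum N n M z \<noteq> 0" if "z \<in> ball 0 (1 + mesh n)" for z
    using one_le_norm_one_add_herglotz_sum[of z n M N] assms that by auto
  moreover have "pole n k - z \<noteq> 0" if "z \<in> ball 0 (1 + mesh n)" for z k
    using norm_pole[of n k] that by auto
  ultimately show ?thesis
    unfolding peak_fun_def[abs_def] herglotz_sum_def
    by (intro holomorphic_intros) (auto simp: herglotz_sum_def)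
qed

lemma borel_measurable_peak_fun: "peak_fun N n M \<in> borel_measurable borel"
  unfolding peak_fun_def[abs_def] herglotz_sum_def by measurable

lemma norm_peak_fun_le_1:
  assumes "cmod z \<le> 1" "0 \<le> M"
  shows "cmod (peak_fun N n M z) \<le> 1"
  using one_le_norm_one_add_herglotz_sum[of z n M N] assms mesh_pos[of n]
  by (simp add: peak_fun_def norm_divide divide_le_eq_1)

definition angles :: "complex set \<Rightarrow> real set" where
  "angles K = {t \<in> {0..2*pi}. cis t \<in> K}"

lemma angles_subset: "angles K \<subseteq> {0..2*pi}"
  by (auto simp: angles_def)

lemma compact_angles: "compact K \<Longrightarrow> compact (angles K)"
proof -
  assume "compact K"
  then have "closed ({0..2*pi} \<inter> cis -` K)"
    by (intro continuous_closed_preimage) (auto intro!: continuous_intros compact_imp_closed)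
  moreover have "{0..2*pi} \<inter> cis -` K = angles K"
    by (auto simp: angles_def)
  ultimately show "compact (angles K)"
    using bounded_subset[OF bounded_closed_interval angles_subset]
    by (simp add: compact_eq_bounded_closed)
qed

lemma angles_null:
  assumes "compact K" "arc_null 1 K"
  shows "angles K \<in> null_sets lborel"
proof -
  have "angles K \<in> sets borel"
    using compact_angles[OF assms(1)] by (simp add: borel_compact)
  moreover have "angles K \<in> null_sets lebesgue"
    using assms(2) by (simp add: arc_null_def angles_def)
  ultimately show ?thesis
    using null_sets_completion_iff[of "angles K" lborel] by simp
qed

lemma grid_hit_near_point:
  assumes "z \<in> K" "K \<subseteq> circ 1"
  shows "\<exists>k\<in>grid_hits (angles K) n. cmod (z - cis (real k * mesh n)) \<le> mesh n"
proof -
  define t where "t = Arg2pi z"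
  have "cmod z = 1" using assms by (auto simp: circ_def)
  then have z: "z = cis t"
    using Arg2pi_eq[of z] by (simp add: t_def cis_conv_exp)
  have t: "0 \<le> t" "t < 2 * pi"
    using Arg2pi_ge_0 Arg2pi_lt_2pi by (auto simp: t_def)
  define k where "k = nat \<lfloor>t / mesh n\<rfloor>"
  have k: "real k * mesh n \<le> t" "t < (real k + 1) * mesh n"
    using t mesh_pos[of n] floor_divide_lower[of "mesh n" t] floor_divide_upper[of "mesh n" t]
    by (simp_all add: k_def)
  then have "real k * mesh n < real (Suc n) * mesh n"
    using t by (simp add: mesh_def)
  then have "k \<le> n"
    using mesh_pos[of n] by (simp add: mult_less_cancel_right)
  then have "k \<in> grid_hits (angles K) n"
    using k t z assms(1) by (auto simp: grid_hits_def angles_def)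
  moreover have "cmod (z - cis (real k * mesh n)) \<le> mesh n"
    using norm_cis_diff_le[of t "real k * mesh n"] k z by (simp add: algebra_simps)
  ultimately show ?thesis by blast
qed

lemma point_near_grid_hit:
  assumes "k \<in> grid_hits (angles K) n"
  shows "\<exists>w\<in>K. cmod (w - cis (real k * mesh n)) \<le> mesh n"
proof -
  obtain t where t: "t \<in> angles K" "real k * mesh n \<le> t" "t \<le> (real k + 1) * mesh n"
    using assms by (auto simp: grid_hits_def)
  then have "cmod (cis t - cis (real k * mesh n)) \<le> mesh n"
    using norm_cis_diff_le[of t "real k * mesh n"] by (simp add: algebra_simps)
  then show ?thesis
    using t(1) by (auto simp: angles_def)
qed

lemma norm_peak_fun_on_arc:
  assumes "z \<in> K" "K \<subseteq> circ 1" "0 \<le> M"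
  shows "cmod (peak_fun (angles K) n M z) \<le> 1 / (1 + M)"
proof -
  obtain k0 where k0: "k0 \<in> grid_hits (angles K) n" "cmod (z - cis (real k0 * mesh n)) \<le> mesh n"
    using grid_hit_near_point[OF assms(1,2)] by blast
  have z: "cmod z = 1"
    using assms by (auto simp: circ_def)
  let ?term = "\<lambda>k. Re (complex_of_real (2 * M * mesh n) * ((pole n k + z) / (pole n k - z)))"
  have "cmod (pole n k0 - z)
      \<le> cmod (pole n k0 - cis (real k0 * mesh n)) + cmod (z - cis (real k0 * mesh n))"
    using norm_triangle_ineq4[of "pole n k0 - cis (real k0 * mesh n)" "z - cis (real k0 * mesh n)"]
    by simp
  also have "\<dots> \<le> 2 * mesh n"
    using norm_pole_diff_cis k0(2) by simp
  finally have "M \<le> ?term k0"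
    by (intro Re_herglotz_term_ge[OF mesh_pos z norm_pole _ assms(3)])
  also have "?term k0 \<le> (\<Sum>k\<in>grid_hits (angles K) n. ?term k)"
    using z mesh_pos[of n] norm_pole assms(3) k0(1)
    by (intro member_le_sum Re_herglotz_term_nonneg) (auto simp: finite_grid_hits)
  also have "\<dots> = Re (herglotz_sum (angles K) n M z)"
    by (simp add: herglotz_sum_def Re_sum)
  finally have "1 + M \<le> cmod (1 + herglotz_sum (angles K) n M z)"
    using complex_Re_le_cmod[of "1 + herglotz_sum (angles K) n M z"] by simp
  then have "1 / cmod (1 + herglotz_sum (angles K) n M z) \<le> 1 / (1 + M)"
    using assms(3) by (intro divide_left_mono mult_pos_pos) linarith+
  then show ?thesis
    by (simp add: peak_fun_def norm_divide)
qed

lemma norm_one_minus_peak_fun_le: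
  assumes "cmod z \<le> 1" "mesh n \<le> 1" "2 * mesh n < infdist z K" "0 \<le> M"
  shows "cmod (1 - peak_fun (angles K) n M z)
           \<le> 6 * M * grid_length (angles K) n / (infdist z K - 2 * mesh n)"
proof -
  let ?F = "herglotz_sum (angles K) n M z"
  let ?e = "infdist z K - 2 * mesh n"
  have one: "1 \<le> cmod (1 + ?F)"
    using assms(1,4) mesh_pos[of n] by (intro one_le_norm_one_add_herglotz_sum) auto
  then have "1 + ?F \<noteq> 0"
    by auto
  then have "1 - peak_fun (angles K) n M z = ?F / (1 + ?F)"
    by (simp add: peak_fun_def field_simps)
  with one have "cmod (1 - peak_fun (angles K) n M z) \<le> cmod ?F"
    by (simp add: norm_divide divide_le_eq mult_le_cancel_left1 order_trans[OF _ mult_right_mono])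
  also have "\<dots> \<le> (\<Sum>k\<in>grid_hits (angles K) n.
      cmod (complex_of_real (2 * M * mesh n) * ((pole n k + z) / (pole n k - z))))"
    unfolding herglotz_sum_def by (rule norm_sum)
  also have "\<dots> \<le> (\<Sum>k\<in>grid_hits (angles K) n. 2 * M * mesh n * 3 / ?e)"
  proof (rule sum_mono)
    fix k assume "k \<in> grid_hits (angles K) n"
    then obtain w where w: "w \<in> K" "cmod (w - cis (real k * mesh n)) \<le> mesh n"
      using point_near_grid_hit by blast
    have "infdist z K \<le> cmod (z - w)"
      using infdist_le[OF w(1), of z] by (simp add: dist_norm)
    also have "\<dots> \<le> cmod (z - pole n k) + cmod (pole n k - cis (real k * mesh n))
        + cmod (cis (real k * mesh n) - w)"
      using norm_triangle_ineq[of "z - pole n k" "pole n k - cis (real k * mesh n)"]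
        norm_triangle_ineq[of "z - cis (real k * mesh n)" "cis (real k * mesh n) - w"]
      by simp
    finally have "?e \<le> cmod (pole n k - z)"
      using norm_pole_diff_cis[of n k] w(2) by (simp add: norm_minus_commute)
    then show "cmod (complex_of_real (2 * M * mesh n) * ((pole n k + z) / (pole n k - z)))
        \<le> 2 * M * mesh n * 3 / ?e"
      using assms by (intro norm_herglotz_term_le[OF assms(1) norm_pole mesh_pos]) auto
  qed
  also have "\<dots> = 6 * M * grid_length (angles K) n / ?e"
    by (simp add: grid_length_def field_simps)
  finally show ?thesis .
qed

(* The factor j is the height M = j of the Herglotz sums used below. *)
lemma fine_grids_exist:
  assumes "compact N" "N \<subseteq> {0..2*pi}" "N \<in> null_sets lborel"
  obtains nn :: "nat \<Rightarrow> nat" where "(\<lambda>j. mesh (nn j)) \<longlonglongrightarrow> 0"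
    "(\<lambda>j. real j * grid_length N (nn j)) \<longlonglongrightarrow> 0"
proof -
  have "\<exists>n. mesh n < 1 / Suc j \<and> grid_length N n < 1 / (Suc j)\<^sup>2" for j
  proof -
    have "\<forall>\<^sub>F n in sequentially. mesh n < 1 / Suc j \<and> grid_length N n < 1 / (Suc j)\<^sup>2"
      using order_tendstoD(2)[OF mesh_tendsto_0] order_tendstoD(2)[OF grid_length_tendsto_0[OF assms]]
      by (intro eventually_conj) auto
    then show ?thesis
      unfolding eventually_sequentially by blast
  qed
  then obtain nn where mesh_nn: "\<And>j. mesh (nn j) < 1 / Suc j"
    and length_nn: "\<And>j. grid_length N (nn j) < 1 / (Suc j)\<^sup>2"
    by metis
  have inverse_Suc: "(\<lambda>j. 1 / real (Suc j)) \<longlonglongrightarrow> 0"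
    using LIMSEQ_inverse_real_of_nat by (simp add: inverse_eq_divide)
  have weighted_length_le: "real j * grid_length N (nn j) \<le> 1 / Suc j" for j
  proof -
    have "real j * grid_length N (nn j) \<le> real (Suc j) * (1 / (real (Suc j))\<^sup>2)"
      using length_nn[of j] grid_length_nonneg by (intro mult_mono) auto
    also have "\<dots> = 1 / real (Suc j)"
      by (simp add: power2_eq_square del: of_nat_Suc)
    finally show ?thesis .
  qed
  show ?thesis
  proof (rule that)
    show "(\<lambda>j. mesh (nn j)) \<longlonglongrightarrow> 0"
      using mesh_nn mesh_pos by (intro Lim_null_comparison[OF _ inverse_Suc] always_eventually)
        (simp add: abs_of_pos less_imp_le)
    show "(\<lambda>j. real j * grid_length N (nn j)) \<longlonglongrightarrow> 0"
      using weighted_length_le grid_length_nonneg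
      by (intro Lim_null_comparison[OF _ inverse_Suc] always_eventually) simp
  qed
qed

lemma peak_fun_tendsto_0:
  assumes "z \<in> K" "K \<subseteq> circ 1"
  shows "(\<lambda>j. peak_fun (angles K) (nn j) (real j) z) \<longlonglongrightarrow> 0"
proof (rule Lim_null_comparison)
  show "\<forall>\<^sub>F j in sequentially. cmod (peak_fun (angles K) (nn j) (real j) z) \<le> inverse (real (Suc j))"
    using norm_peak_fun_on_arc[OF assms, of "real _"]
    by (intro always_eventually allI) (simp add: inverse_eq_divide add.commute)
qed (rule LIMSEQ_inverse_real_of_nat)

lemma peak_fun_tendsto_1:
  assumes "compact K" "K \<noteq> {}" "cmod z \<le> 1" "z \<notin> K"
    and "(\<lambda>j. mesh (nn j)) \<longlonglongrightarrow> 0" "(\<lambda>j. real j * grid_length (angles K) (nn j)) \<longlonglongrightarrow> 0"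
  shows "(\<lambda>j. peak_fun (angles K) (nn j) (real j) z) \<longlonglongrightarrow> 1"
proof -
  define d where "d = infdist z K"
  have "0 < d"
    using in_closed_iff_infdist_zero[OF compact_imp_closed[OF assms(1)] assms(2), of z]
      infdist_nonneg[of z K] assms(4) by (simp add: d_def)
  have "\<forall>\<^sub>F j in sequentially. mesh (nn j) < 1"
    by (rule order_tendstoD(2)[OF assms(5)]) simp
  moreover have "\<forall>\<^sub>F j in sequentially. mesh (nn j) < d / 2"
    by (rule order_tendstoD(2)[OF assms(5)]) (simp add: \<open>0 < d\<close>)
  ultimately have "\<forall>\<^sub>F j in sequentially. norm (peak_fun (angles K) (nn j) (real j) z - 1)
      \<le> 6 * (real j * grid_length (angles K) (nn j)) / (d - 2 * mesh (nn j))"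
  proof eventually_elim
    case (elim j)
    then show ?case
      using norm_one_minus_peak_fun_le[OF assms(3), of "nn j" K "real j"]
      by (simp add: d_def norm_minus_commute mult.assoc)
  qed
  moreover have "(\<lambda>j. 6 * (real j * grid_length (angles K) (nn j)) / (d - 2 * mesh (nn j)))
      \<longlonglongrightarrow> 0"
  proof -
    have "(\<lambda>j. d - 2 * mesh (nn j)) \<longlonglongrightarrow> d - 2 * 0"
      by (intro tendsto_diff tendsto_const tendsto_mult_left assms(5))
    from tendsto_divide[OF tendsto_mult_left[OF assms(6), of 6] this]
    show ?thesis
      using \<open>0 < d\<close> by simp
  qed
  ultimately have "(\<lambda>j. peak_fun (angles K) (nn j) (real j) z - 1) \<longlonglongrightarrow> 0"
    by (rule Lim_null_comparison)
  then show ?thesis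
    by (simp add: LIM_zero_iff)
qed

lemma peak_functions_exist:
  assumes "compact K" "K \<subseteq> circ 1" "arc_null 1 K"
  obtains g :: "nat \<Rightarrow> complex \<Rightarrow> complex" where
    "\<And>j. \<exists>R>1. g j holomorphic_on ball 0 R" "\<And>j. g j \<in> borel_measurable borel"
    "\<And>j z. cmod z \<le> 1 \<Longrightarrow> cmod (g j z) \<le> 1"
    "\<And>z. z \<in> K \<Longrightarrow> (\<lambda>j. g j z) \<longlonglongrightarrow> 0"
    "\<And>z. cmod z \<le> 1 \<Longrightarrow> z \<notin> K \<Longrightarrow> (\<lambda>j. g j z) \<longlonglongrightarrow> 1"
proof (cases "K = {}")
  case True
  then show ?thesis
    by (intro that[of "\<lambda>j z. 1"]) (auto intro: exI[of _ 2])
next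
  case False
  obtain nn where nn: "(\<lambda>j. mesh (nn j)) \<longlonglongrightarrow> 0"
    "(\<lambda>j. real j * grid_length (angles K) (nn j)) \<longlonglongrightarrow> 0"
    using fine_grids_exist[OF compact_angles angles_subset angles_null] assms by metis
  show ?thesis
  proof (rule that[of "\<lambda>j. peak_fun (angles K) (nn j) (real j)"])
    show "\<exists>R>1. peak_fun (angles K) (nn j) (real j) holomorphic_on ball 0 R" for j
      using mesh_pos[of "nn j"] peak_fun_holomorphic[of "real j" "angles K" "nn j"]
      by (intro exI[of _ "1 + mesh (nn j)"]) simp
  qed (use assms False nn in \<open>simp_all add: borel_measurable_peak_fun norm_peak_fun_le_1
      peak_fun_tendsto_0 peak_fun_tendsto_1\<close>)
qed

lemma (in complex_measure) cval_eq_0_if_tendsto_indicator: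
  assumes "K \<in> sets borel" "\<And>j. h j \<in> borel_measurable borel"
    and "\<And>j z. z \<in> S \<Longrightarrow> norm (h j z) \<le> B" "\<And>z. z \<in> S \<Longrightarrow> (\<lambda>j. h j z) \<longlonglongrightarrow> indicator K z"
    and "\<And>j. cint Ms (h j) = 0"
  shows "cval Ms K = 0"
proof -
  have "(\<lambda>j. cint Ms (h j)) \<longlonglongrightarrow> cint Ms (indicator K)"
    by (rule cint_tendsto[OF borel_measurable_indicator[OF assms(1)] assms(2,4,3)])
  then show ?thesis
    using cint_indicator[OF assms(1)] by (simp add: assms(5) LIMSEQ_const_iff)
qed

lemma (in complex_measure) cval_preimage_eq_0:
  assumes "compact K'" "K' \<subseteq> circ 1" "arc_null 1 K'"
    and "\<phi> \<in> borel_measurable borel" "\<And>z. z \<in> S \<Longrightarrow> cmod (\<phi> z) \<le> 1"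
    and "\<And>n. cint Ms (\<lambda>z. \<phi> z ^ n) = 0"
    and "K \<in> sets borel" "\<And>z. z \<in> S \<Longrightarrow> \<phi> z \<in> K' \<longleftrightarrow> z \<in> K"
  shows "cval Ms K = 0"
proof -
  obtain g where g: "\<And>j. \<exists>R>1. g j holomorphic_on ball 0 R" "\<And>j. g j \<in> borel_measurable borel"
    "\<And>j z. cmod z \<le> 1 \<Longrightarrow> cmod (g j z) \<le> 1"
    "\<And>z. z \<in> K' \<Longrightarrow> (\<lambda>j. g j z) \<longlonglongrightarrow> 0"
    "\<And>z. cmod z \<le> 1 \<Longrightarrow> z \<notin> K' \<Longrightarrow> (\<lambda>j. g j z) \<longlonglongrightarrow> 1"
    using peak_functions_exist[OF assms(1-3)] by blast
  have g_\<phi>_borel: "(\<lambda>z. g j (\<phi> z)) \<in> borel_measurable borel" for j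
    using measurable_compose[OF assms(4) g(2)] by (simp add: comp_def)
  show ?thesis
  proof (rule cval_eq_0_if_tendsto_indicator[OF assms(7), where h = "\<lambda>j z. 1 - g j (\<phi> z)"])
    show "(\<lambda>z. 1 - g j (\<phi> z)) \<in> borel_measurable borel" for j
      using g_\<phi>_borel[of j] by measurable
    show "cmod (1 - g j (\<phi> z)) \<le> 2" if "z \<in> S" for j z
      using norm_triangle_ineq4[of 1 "g j (\<phi> z)"] g(3)[OF assms(5)[OF that], of j] by simp
    show "(\<lambda>j. 1 - g j (\<phi> z)) \<longlonglongrightarrow> indicator K z" if "z \<in> S" for z
    proof (cases "z \<in> K")
      case True
      then have "(\<lambda>j. 1 - g j (\<phi> z)) \<longlonglongrightarrow> 1 - 0"
        using assms(8)[OF that] by (intro tendsto_diff tendsto_const g(4)) simp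
      then show ?thesis
        using True by simp
    next
      case False
      then have "(\<lambda>j. 1 - g j (\<phi> z)) \<longlonglongrightarrow> 1 - 1"
        using assms(5,8)[OF that] by (intro tendsto_diff tendsto_const g(5)) simp_all
      then show ?thesis
        using False by simp
    qed
    show "cint Ms (\<lambda>z. 1 - g j (\<phi> z)) = 0" for j
    proof -
      obtain R where "1 < R" "g j holomorphic_on ball 0 R"
        using g(1) by blast
      then have "cint Ms (\<lambda>z. g j (\<phi> z)) = 0"
        by (rule cint_holomorphic_comp_eq_0[OF _ _ assms(4,5) g_\<phi>_borel assms(6)])
      moreover have "cint Ms (\<lambda>z. 1) = 0"
        using assms(6)[of 0] by simp
      moreover have "cint Ms (\<lambda>z. 1 - g j (\<phi> z)) = cint Ms (\<lambda>z. 1) - cint Ms (\<lambda>z. g j (\<phi> z))"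
        using g_\<phi>_borel g(3) assms(5) by (intro cint_diff[where B=1 and C=1]) auto
      ultimately show ?thesis
        by simp
    qed
  qed
qed

section \<open>Measures on the boundary of an annulus with vanishing Laurent moments\<close>

locale annulus_measure = complex_measure "circ 1 \<union> circ r0" Ms for r0 :: real and Ms +
  assumes r0_pos: "0 < r0" and r0_less_1: "r0 < 1"
    and laurent_moments: "\<And>n::int. cint Ms (\<lambda>z. z powi n) = 0"
begin

lemma cval_compact_outer:
  assumes "compact K" "K \<subseteq> circ 1" "arc_null 1 K"
  shows "cval Ms K = 0"
proof (rule cval_preimage_eq_0[OF assms, where \<phi> = "\<lambda>z. z"])
  show "cmod z \<le> 1" if "z \<in> circ 1 \<union> circ r0" for z
    using that r0_less_1 by (auto simp: circ_def)
  show "cint Ms (\<lambda>z. z ^ n) = 0" for n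
    using laurent_moments[of "int n"] by simp
  show "K \<in> sets borel"
    using assms(1) by (simp add: borel_compact)
qed simp_all

lemma cval_compact_inner:
  assumes "compact K" "K \<subseteq> circ r0" "arc_null r0 K"
  shows "cval Ms K = 0"
proof -
  define \<phi> where "\<phi> z = complex_of_real r0 / z" for z
  have K_nonzero: "0 \<notin> K"
    using assms(2) r0_pos by (auto simp: circ_def)
  show ?thesis
  proof (rule cval_preimage_eq_0[where K' = "\<phi> ` K" and \<phi> = \<phi>])
    show "compact (\<phi> ` K)"
      unfolding \<phi>_def using K_nonzero
      by (intro compact_continuous_image[OF _ assms(1)] continuous_intros) auto
    show "\<phi> ` K \<subseteq> circ 1"
      using assms(2) r0_pos by (auto simp: circ_def \<phi>_def norm_divide)
    show "arc_null 1 (\<phi> ` K)"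
      unfolding \<phi>_def by (rule arc_null_image_inverse[OF r0_pos assms(3)])
    show "\<phi> \<in> borel_measurable borel"
      unfolding \<phi>_def[abs_def] by measurable
    show "cmod (\<phi> z) \<le> 1" if "z \<in> circ 1 \<union> circ r0" for z
      using that r0_pos r0_less_1 by (auto simp: circ_def \<phi>_def norm_divide)
    show "cint Ms (\<lambda>z. \<phi> z ^ n) = 0" for n
    proof -
      have "cint Ms (\<lambda>z. \<phi> z ^ n) = cint Ms (\<lambda>z. complex_of_real r0 ^ n * z powi (- int n))"
        by (simp add: \<phi>_def power_int_minus divide_inverse power_mult_distrib power_inverse)
      then show ?thesis
        by (simp add: cint_cmult laurent_moments)
    qed
    show "K \<in> sets borel"
      using assms(1) by (simp add: borel_compact)
    have "inj_on \<phi> (- {0})"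
      using r0_pos by (auto simp: inj_on_def \<phi>_def field_simps)
    then show "\<phi> z \<in> \<phi> ` K \<longleftrightarrow> z \<in> K" if "z \<in> circ 1 \<union> circ r0" for z
      using that r0_pos K_nonzero by (intro inj_on_image_mem_iff) (auto simp: circ_def)
  qed
qed

lemma cval_arc_null:
  assumes "P \<in> sets borel" "P \<subseteq> circ 1 \<union> circ r0" "arc_null 1 P" "arc_null r0 P"
  shows "cval Ms P = 0"
proof (rule cval_eq_0_if_compact_subsets[OF assms(1)])
  fix K assume K: "compact K" "K \<subseteq> P"
  have split: "(K \<inter> circ 1) \<union> (K \<inter> circ r0) = K"
    using K(2) assms(2) by blast
  have "cval Ms ((K \<inter> circ 1) \<union> (K \<inter> circ r0)) = cval Ms (K \<inter> circ 1) + cval Ms (K \<inter> circ r0)"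
    using K(1) r0_less_1 by (intro cval_Un) (auto simp: borel_compact circ_def)
  moreover have "cval Ms (K \<inter> circ 1) = 0"
    using K assms(3) by (intro cval_compact_outer compact_Int_closed)
      (auto simp: circ_eq_sphere intro: arc_null_mono)
  moreover have "cval Ms (K \<inter> circ r0) = 0"
    using K assms(4) by (intro cval_compact_inner compact_Int_closed)
      (auto simp: circ_eq_sphere intro: arc_null_mono)
  ultimately show "cval Ms K = 0"
    unfolding split by simp
qed

end

lemma annulus_measureI:
  assumes "0 < r0" "r0 < 1" "cmeasure_on (circ 1 \<union> circ r0) Ms"
    and "\<forall>j::int. cintegral Ms (circ r0) (\<lambda>z. z powi (-j))
                 = - cintegral Ms (circ 1) (\<lambda>z. z powi (-j))"
  shows "annulus_measure r0 Ms"
proof -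
  interpret complex_measure "circ 1 \<union> circ r0" Ms
    by (rule complex_measure.intro) fact
  have "cint Ms (\<lambda>z. z powi n) = 0" for n :: int
  proof -
    have "(\<lambda>z::complex. z powi n) \<in> borel_measurable borel"
      unfolding power_int_def by measurable
    moreover have "cmod (z powi n) \<le> 1 + r0 powi n" if "z \<in> circ 1 \<union> circ r0" for z
      using that assms(1) by (auto simp: circ_def norm_power_int)
    moreover have "circ 1 \<inter> circ r0 = {}"
      using assms(2) by (auto simp: circ_def)
    ultimately have "cint Ms (\<lambda>z. z powi n)
        = cintegral Ms (circ 1) (\<lambda>z. z powi n) + cintegral Ms (circ r0) (\<lambda>z. z powi n)"
      by (intro cint_eq_cintegral_add) auto
    then show ?thesis
      using assms(4)[rule_format, of "- n"] by simp
  qed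
  then show ?thesis
    using assms(1,2) by unfold_locales
qed

theorem theorem1p2:
  fixes r0 :: real and Ms :: "complex measure list"
  assumes "0 < r0" and "r0 < 1"
    and "cmeasure_on (circ 1 \<union> circ r0) Ms"
    and "\<forall>j::int. cintegral Ms (circ r0) (\<lambda>z. z powi (-j))
                 = - cintegral Ms (circ 1) (\<lambda>z. z powi (-j))"
  shows "\<forall>E. E \<subseteq> circ 1 \<union> circ r0 \<and> arc_null 1 E \<and> arc_null r0 E \<longrightarrow> cnull Ms E"
proof (intro allI impI, elim conjE)
  interpret annulus_measure r0 Ms
    using annulus_measureI[OF assms] .
  fix E assume "E \<subseteq> circ 1 \<union> circ r0" "arc_null 1 E" "arc_null r0 E"
  then obtain B where B: "B \<in> sets borel" "E \<subseteq> B" "B \<subseteq> circ 1 \<union> circ r0"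
    "arc_null 1 B" "arc_null r0 B"
    using arc_null_Borel_hull_two_circles[of 1 r0 E] assms(1,2) by auto
  have "cval Ms P = 0" if "P \<in> sets borel" "P \<subseteq> B" for P
    using that B(3) arc_null_mono[OF B(4) that(2)] arc_null_mono[OF B(5) that(2)]
    by (intro cval_arc_null) auto
  then have "ctotal_variation Ms B = 0"
    by (rule ctotal_variation_eq_0[OF B(1)])
  then show "cnull Ms E"
    unfolding cnull_def using B(1,2) by blast
qed

end
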